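(* Consider a secure index coding problem $(W_i\mid A_i,P_i)$, $i\in[m]$, on $n$ messages, a securely achievable symmetric rate $R$, and a set function $g:2^{[n]}\to\mathbb R$ satisfying conditions (G1)–(G6) of the context with $R_i=R$ for all $i\in[n]$. Then for any $S\subseteq S'\subseteq[n]$, $$g(S')\ge g(S)+R\cdot h_{\rm MAIS}(S,S').$$ Furthermore, for any $S\subseteq S'\subseteq[n]$ with $S - S'$, we have $h_{\rm MAIS}(S,S')=0$.
   Context: Secure index coding: $n$ independent uniformly distributed messages $X_i\in\{0,1\}^{t_i}$; $m$ parties, party $i$ with side information $A_i\subseteq[n]$, requested set $W_i\subseteq[n]\setminus A_i$ (possibly empty), interfering set $B_i=[n]\setminus(A_i\cup W_i)$, prohibited set $P_i\subseteq B_i$. A $(\mathbf t,M)$ secure index code is a deterministic surjective encoder $Y=\phi(X_{[n]})\in\{1,\ldots,M\}$ with $H(X_{W_i}\mid Y,X_{A_i})=0$ for all $i$ and $I(X_j;Y\mid X_{A_i})=0$ for all $j\in P_i$; rates $R_i=t_i/\log M$. Standing assumption: the problem is feasible (its symmetric secure capacity is positive). Conditions on $g$ (for a rate tuple $(R_i)$): (G1) $\sum_{i\in W}R_i=g(B\cup W)-g(B)=g(W)$ for all $i\in[m]$, $W\subseteq W_i$, $B\subseteq (B_i\cup W_i)\setminus W$; (G2) $g(\emptyset)=0$; (G3) $g([n])\le1$; (G4) $g(S)\le g(S')$ whenever $S\subseteq S'$; (G5) $g(S\cap S')+g(S\cup S')\le g(S)+g(S')$; (G6) $g(B_i)=g(B_i\setminus\{j\})$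 for all $j\in P_i$, $i\in[m]$. Acyclic sets: $K\subseteq[n]\setminus S$ is acyclic w.r.t. $S$ if it can be ordered $K=\{k_1,\ldots,k_r\}$ so that for each $\ell\in[r]$ some party $j_\ell$ has $k_\ell\in W_{j_\ell}$ and $S\cup\{k_1,\ldots,k_\ell\}\subseteq B_{j_\ell}\cup W_{j_\ell}$; for $S\subseteq S'$, $h_{\rm MAIS}(S,S')=\max\{|K|:K\subseteq S'\setminus S\text{ acyclic w.r.t. }S\}$. Relation $S - S'$: for each $i$ with $P_i\ne\emptyset$ and $T\subseteq[n]\setminus B_i$, $N(i,T)=\{T\cup B_i\setminus\{j\}:j\in P_i\}\cup\{T\cup B_i\}$; repeatedly merge intersecting such families until pairwise disjoint; $S - S'$ iff $S,S'$ lie in the same resulting family. *)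

theory Defs
  imports Complex_Main
begin

(* Messages are indexed by [n] = {1..n}, parties by [m] = {1..m}.
   A problem instance is given by n, m and the maps A (side information),
   W (requested sets), P (prohibited sets). *)

definition B_set :: "nat \<Rightarrow> (nat \<Rightarrow> nat set) \<Rightarrow> (nat \<Rightarrow> nat set) \<Rightarrow> nat \<Rightarrow> nat set" where
  "B_set n A W i = {1..n} - (A i \<union> W i)"

definition well_formed_problem ::
  "nat \<Rightarrow> nat \<Rightarrow> (nat \<Rightarrow> nat set) \<Rightarrow> (nat \<Rightarrow> nat set) \<Rightarrow> (nat \<Rightarrow> nat set) \<Rightarrow> bool" where
  "well_formed_problem n m A W P \<longleftrightarrow>
     (\<forall>i\<in>{1..m}. A i \<subseteq> {1..n} \<and> W i \<subseteq> {1..n} - A i \<and> P i \<subseteq> B_set n A W i)"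

(* Realisations of the message tuple X_[n]: X_k \<in> {0,1}^{t_k}, encoded as a bool list
   of length t_k (and [] outside [n]). The messages are independent and uniform,
   i.e. the tuple is uniform on this finite set. *)
definition msgs :: "nat \<Rightarrow> (nat \<Rightarrow> nat) \<Rightarrow> (nat \<Rightarrow> bool list) set" where
  "msgs n t = {x. \<forall>k. (k \<in> {1..n} \<longrightarrow> length (x k) = t k) \<and> (k \<notin> {1..n} \<longrightarrow> x k = [])}"

definition agree_on :: "nat set \<Rightarrow> (nat \<Rightarrow> bool list) \<Rightarrow> (nat \<Rightarrow> bool list) \<Rightarrow> bool" where
  "agree_on S x x' \<longleftrightarrow> (\<forall>k\<in>S. x k = x' k)"

(* Decodability H(X_{W_i} | Y, X_{A_i}) = 0 (all message tuples have positive probability).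
   Security I(X_j ; Y | X_{A_i}) = 0 written out as conditional independence of
   X_j and Y given X_{A_i} = a, for the uniform distribution on msgs n t
   (probabilities written as counts, denominators cleared). *)
definition secure_index_code ::
  "nat \<Rightarrow> nat \<Rightarrow> (nat \<Rightarrow> nat set) \<Rightarrow> (nat \<Rightarrow> nat set) \<Rightarrow> (nat \<Rightarrow> nat set)
   \<Rightarrow> (nat \<Rightarrow> nat) \<Rightarrow> nat \<Rightarrow> ((nat \<Rightarrow> bool list) \<Rightarrow> nat) \<Rightarrow> bool" where
  "secure_index_code n m A W P t M phi \<longleftrightarrow>
     phi ` msgs n t = {1..M} \<and>
     (\<forall>i\<in>{1..m}. \<forall>x\<in>msgs n t. \<forall>x'\<in>msgs n t.
        phi x = phi x' \<and> agree_on (A i) x x' \<longrightarrow> agree_on (W i) x x') \<and>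
     (\<forall>i\<in>{1..m}. \<forall>j\<in>P i. \<forall>a y v.
        card {x\<in>msgs n t. agree_on (A i) x a \<and> x j = v \<and> phi x = y}
          * card {x\<in>msgs n t. agree_on (A i) x a}
        = card {x\<in>msgs n t. agree_on (A i) x a \<and> x j = v}
          * card {x\<in>msgs n t. agree_on (A i) x a \<and> phi x = y})"

definition sec_achievable_sym ::
  "nat \<Rightarrow> nat \<Rightarrow> (nat \<Rightarrow> nat set) \<Rightarrow> (nat \<Rightarrow> nat set) \<Rightarrow> (nat \<Rightarrow> nat set) \<Rightarrow> real \<Rightarrow> bool" where
  "sec_achievable_sym n m A W P R \<longleftrightarrow>
     (\<exists>t M phi. secure_index_code n m A W P t M phi \<and>
        (\<forall>k\<in>{1..n}. R \<le> real (t k) / log 2 (real M)))"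

(* Standing assumption: symmetric secure capacity (sup of achievable symmetric rates) is positive. *)
definition feasible ::
  "nat \<Rightarrow> nat \<Rightarrow> (nat \<Rightarrow> nat set) \<Rightarrow> (nat \<Rightarrow> nat set) \<Rightarrow> (nat \<Rightarrow> nat set) \<Rightarrow> bool" where
  "feasible n m A W P \<longleftrightarrow> (\<exists>R>0. sec_achievable_sym n m A W P R)"

definition G_conditions ::
  "nat \<Rightarrow> nat \<Rightarrow> (nat \<Rightarrow> nat set) \<Rightarrow> (nat \<Rightarrow> nat set) \<Rightarrow> (nat \<Rightarrow> nat set) \<Rightarrow> real
   \<Rightarrow> (nat set \<Rightarrow> real) \<Rightarrow> bool" where
  "G_conditions n m A W P R g \<longleftrightarrow>
     (\<forall>i\<in>{1..m}. \<forall>V. V \<subseteq> W i \<longrightarrow> (\<forall>Bs. Bs \<subseteq> (B_set n A W i \<union> W i) - V \<longrightarrow>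
        (\<Sum>k\<in>V. R) = g (Bs \<union> V) - g Bs \<and> g (Bs \<union> V) - g Bs = g V)) \<and>
     g {} = 0 \<and>
     g {1..n} \<le> 1 \<and>
     (\<forall>S S'. S \<subseteq> S' \<and> S' \<subseteq> {1..n} \<longrightarrow> g S \<le> g S') \<and>
     (\<forall>S S'. S \<subseteq> {1..n} \<and> S' \<subseteq> {1..n} \<longrightarrow> g (S \<inter> S') + g (S \<union> S') \<le> g S + g S') \<and>
     (\<forall>i\<in>{1..m}. \<forall>j\<in>P i. g (B_set n A W i) = g (B_set n A W i - {j}))"

definition acyclic_wrt ::
  "nat \<Rightarrow> nat \<Rightarrow> (nat \<Rightarrow> nat set) \<Rightarrow> (nat \<Rightarrow> nat set) \<Rightarrow> nat set \<Rightarrow> nat set \<Rightarrow> bool" where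
  "acyclic_wrt n m A W S K \<longleftrightarrow> K \<subseteq> {1..n} - S \<and>
     (\<exists>ks. distinct ks \<and> set ks = K \<and>
        (\<forall>l<length ks. \<exists>j\<in>{1..m}. ks ! l \<in> W j \<and>
            S \<union> set (take (Suc l) ks) \<subseteq> B_set n A W j \<union> W j))"

definition h_MAIS ::
  "nat \<Rightarrow> nat \<Rightarrow> (nat \<Rightarrow> nat set) \<Rightarrow> (nat \<Rightarrow> nat set) \<Rightarrow> nat set \<Rightarrow> nat set \<Rightarrow> nat" where
  "h_MAIS n m A W S S' = Max {card K | K. K \<subseteq> S' - S \<and> acyclic_wrt n m A W S K}"

definition N_fam ::
  "nat \<Rightarrow> (nat \<Rightarrow> nat set) \<Rightarrow> (nat \<Rightarrow> nat set) \<Rightarrow> (nat \<Rightarrow> nat set) \<Rightarrow> nat \<Rightarrow> nat set \<Rightarrow> nat set set" where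
  "N_fam n A W P i T = {T \<union> B_set n A W i - {j} | j. j \<in> P i} \<union> {T \<union> B_set n A W i}"

(* Merging intersecting families until pairwise disjoint yields the connected
   components of the "lie in a common family" relation; S - S' iff S and S'
   are in the same component, i.e. related by the transitive closure. *)
definition dash_rel ::
  "nat \<Rightarrow> nat \<Rightarrow> (nat \<Rightarrow> nat set) \<Rightarrow> (nat \<Rightarrow> nat set) \<Rightarrow> (nat \<Rightarrow> nat set) \<Rightarrow> nat set rel" where
  "dash_rel n m A W P = ({(X, Y). \<exists>i\<in>{1..m}. \<exists>T. P i \<noteq> {} \<and> T \<subseteq> {1..n} - B_set n A W i \<and>
        X \<in> N_fam n A W P i T \<and> Y \<in> N_fam n A W P i T})\<^sup>+"

end

theory Submission
  imports Defs
begin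

(*
  Part one: along an acyclic ordering k_1, ..., k_r of K, condition (G1) for the party
  decoding k_l says that adding k_l raises g by exactly R, so g(S \<union> K) = g(S) + R |K|,
  and monotonicity (G4) gives the bound.

  Part two: for a secure code, the output Y is conditionally independent of a prohibited
  message X_j given X_D for every D \<subseteq> A_i \<union> W_i (security gives this for D = A_i,
  decodability lets D grow to A_i \<union> W_i, and marginalising lets it shrink again).
  Hence P(Y = y | X_([n]-Z)) is the same for all Z in a family N(i,T), and therefore for S
  and S' whenever S - S'. If an acyclic K \<subseteq> S' - S were nonempty, its first element k is
  decoded by a party j whose side information avoids S \<union> {k}. Changing X_k leaves X_([n]-S')
  unchanged, so it cannot make the output of the all-zero tuple impossible given X_([n]-S):
  some tuple z differing from it at k has the same output and the same side information
  for party j, contradicting decodability. Feasibility provides such a code with all t_k > 0.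
*)

lemma G_conditions_increment:
  assumes G: "G_conditions n m A W P R g" and i: "i \<in> {1..m}" and k: "k \<in> W i"
    and Bs: "insert k Bs \<subseteq> B_set n A W i \<union> W i" "k \<notin> Bs"
  shows "g (insert k Bs) = g Bs + R"
proof -
  have G1: "\<forall>i \<in> {1..m}. \<forall>V. V \<subseteq> W i \<longrightarrow> (\<forall>Bs. Bs \<subseteq> (B_set n A W i \<union> W i) - V \<longrightarrow>
              (\<Sum>k\<in>V. R) = g (Bs \<union> V) - g Bs \<and> g (Bs \<union> V) - g Bs = g V)"
    using G unfolding G_conditions_def by (rule conjunct1)
  have "{k} \<subseteq> W i" "Bs \<subseteq> (B_set n A W i \<union> W i) - {k}"
    using k Bs by auto
  from G1[rule_format, OF i this] have "(\<Sum>l\<in>{k}. R) = g (Bs \<union> {k}) - g Bs"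
    by (rule conjunct1)
  then show ?thesis
    by simp
qed

lemma G_conditions_mono:
  assumes "G_conditions n m A W P R g" "S \<subseteq> S'" "S' \<subseteq> {1..n}"
  shows "g S \<le> g S'"
proof -
  have "\<forall>S S'. S \<subseteq> S' \<and> S' \<subseteq> {1..n} \<longrightarrow> g S \<le> g S'"
    using assms(1) unfolding G_conditions_def by (elim conjE)
  then show ?thesis
    using assms(2,3) by blast
qed

lemma G_conditions_acyclic_gain:
  assumes G: "G_conditions n m A W P R g" and K: "acyclic_wrt n m A W S K"
  shows "g (S \<union> K) = g S + R * real (card K)"
proof -
  obtain ks where ks: "distinct ks" "set ks = K" "K \<inter> S = {}"
    and step: "\<forall>l < length ks. \<exists>j \<in> {1..m}. ks ! l \<in> W j
                 \<and> S \<union> set (take (Suc l) ks) \<subseteq> B_set n A W j \<union> W j"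
    using K unfolding acyclic_wrt_def by blast
  have "g (S \<union> set (take l ks)) = g S + R * real l" if "l \<le> length ks" for l
    using that
  proof (induction l)
    case (Suc l)
    then have l: "l < length ks"
      by simp
    obtain j where j: "j \<in> {1..m}" "ks ! l \<in> W j" "S \<union> set (take (Suc l) ks) \<subseteq> B_set n A W j \<union> W j"
      using step l by blast
    have take_Suc: "set (take (Suc l) ks) = insert (ks ! l) (set (take l ks))"
      using l by (simp add: take_Suc_conv_app_nth)
    have "ks ! l \<notin> set (take l ks)"
      using ks(1) l by (simp add: distinct_conv_nth in_set_conv_nth)
    moreover have "ks ! l \<notin> S"
      using ks(2,3) l nth_mem by blast
    ultimately have "g (insert (ks ! l) (S \<union> set (take l ks))) = g (S \<union> set (take l ks)) + R"
      using G_conditions_increment[OF G j(1,2)] j(3) unfolding take_Suc by simp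
    then show ?case
      using Suc.IH l take_Suc by (simp add: algebra_simps)
  qed simp
  from this[of "length ks"] show ?thesis
    using ks(1,2) distinct_card by fastforce
qed

lemma acyclic_wrt_empty: "acyclic_wrt n m A W S {}"
  unfolding acyclic_wrt_def by simp

lemma acyclic_wrt_first:
  assumes "acyclic_wrt n m A W S K" "K \<noteq> {}"
  obtains k j where "k \<in> K" "j \<in> {1..m}" "k \<in> W j" "insert k S \<subseteq> B_set n A W j \<union> W j"
proof -
  obtain ks where ks: "set ks = K"
    and step: "\<forall>l < length ks. \<exists>j \<in> {1..m}. ks ! l \<in> W j
                 \<and> S \<union> set (take (Suc l) ks) \<subseteq> B_set n A W j \<union> W j"
    using assms(1) unfolding acyclic_wrt_def by blast
  obtain k ks' where ks_Cons: "ks = k # ks'"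
    using assms(2) ks by (cases ks) auto
  then have "\<exists>j \<in> {1..m}. k \<in> W j \<and> S \<union> {k} \<subseteq> B_set n A W j \<union> W j"
    using step[rule_format, of 0] by simp
  moreover have "k \<in> K"
    using ks ks_Cons by auto
  ultimately show ?thesis
    using that by auto
qed

lemma h_MAIS_attained:
  assumes "S' \<subseteq> {1..n}"
  obtains K where "K \<subseteq> S' - S" "acyclic_wrt n m A W S K" "h_MAIS n m A W S S' = card K"
proof -
  let ?C = "{card K | K. K \<subseteq> S' - S \<and> acyclic_wrt n m A W S K}"
  have "?C \<subseteq> card ` Pow (S' - S)"
    by auto
  moreover have "finite (S' - S)"
    using assms finite_subset by blast
  ultimately have "finite ?C"
    using finite_subset by blast
  moreover have "card ({} :: nat set) \<in> ?C"
    using acyclic_wrt_empty[of n m A W S] by blast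
  ultimately have "h_MAIS n m A W S S' \<in> ?C"
    unfolding h_MAIS_def by (intro Max_in) auto
  then show ?thesis
    using that by auto
qed

lemma G_conditions_h_MAIS_bound:
  assumes G: "G_conditions n m A W P R g" and S: "S \<subseteq> S'" "S' \<subseteq> {1..n}"
  shows "g S + R * real (h_MAIS n m A W S S') \<le> g S'"
proof -
  obtain K where K: "K \<subseteq> S' - S" "acyclic_wrt n m A W S K" "h_MAIS n m A W S S' = card K"
    using h_MAIS_attained[OF S(2)] .
  have "S \<union> K \<subseteq> S'"
    using S(1) K(1) by blast
  then have "g (S \<union> K) \<le> g S'"
    using G_conditions_mono[OF G _ S(2)] by blast
  then show ?thesis
    using G_conditions_acyclic_gain[OF G K(2)] K(3) by simp
qed

lemma finite_msgs: "finite (msgs n t)"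
proof -
  let ?N = "Max (t ` {1..n})"
  have "msgs n t \<subseteq> {f. \<forall>k. (k \<in> {1..n} \<longrightarrow> f k \<in> {xs. set xs \<subseteq> UNIV \<and> length xs \<le> ?N})
                          \<and> (k \<notin> {1..n} \<longrightarrow> f k = [])}"
    unfolding msgs_def by auto
  moreover have "finite \<dots>"
    by (rule finite_set_of_finite_funs) (use finite_lists_length_le[of "UNIV :: bool set" ?N] in auto)
  ultimately show ?thesis
    using finite_subset by blast
qed

lemma msgs_fun_upd: "x \<in> msgs n t \<Longrightarrow> l \<in> {1..n} \<Longrightarrow> length u = t l \<Longrightarrow> x(l := u) \<in> msgs n t"
  unfolding msgs_def by auto

lemma card_cylinder_split:
  assumes "l \<in> D" "l \<in> {1..n}"
  shows "card {s \<in> msgs n t. agree_on (D - {l}) s x \<and> Q s}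
       = (\<Sum>u | length u = t l. card {s \<in> msgs n t. agree_on D s (x(l := u)) \<and> Q s})"
proof -
  let ?C = "{s \<in> msgs n t. agree_on (D - {l}) s x \<and> Q s}"
  have "?C = (\<Union>u \<in> {u. length u = t l}. {s \<in> msgs n t. agree_on D s (x(l := u)) \<and> Q s})"
    using assms unfolding msgs_def agree_on_def by auto
  also have "card \<dots> = (\<Sum>u | length u = t l. card {s \<in> msgs n t. agree_on D s (x(l := u)) \<and> Q s})"
  proof (rule card_UN_disjoint)
    show "\<forall>u \<in> {u. length u = t l}. \<forall>u' \<in> {u. length u = t l}. u \<noteq> u' \<longrightarrow>
        {s \<in> msgs n t. agree_on D s (x(l := u)) \<and> Q s} \<inter> {s \<in> msgs n t. agree_on D s (x(l := u')) \<and> Q s} = {}"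
      using assms(1) unfolding agree_on_def by fastforce
  qed (simp_all add: finite_list_length finite_msgs)
  finally show ?thesis .
qed

lemma card_cylinder_coord_swap:
  assumes "j \<notin> D" "j \<in> {1..n}" "length v = t j" "length v' = t j"
  shows "card {s \<in> msgs n t. agree_on D s x \<and> s j = v} = card {s \<in> msgs n t. agree_on D s x \<and> s j = v'}"
proof (rule bij_betw_same_card, rule bij_betw_byWitness[where f = "\<lambda>s. s(j := v')" and f' = "\<lambda>s. s(j := v)"])
  show "(\<lambda>s. s(j := v')) ` {s \<in> msgs n t. agree_on D s x \<and> s j = v}
      \<subseteq> {s \<in> msgs n t. agree_on D s x \<and> s j = v'}"
    using assms msgs_fun_upd by (auto simp: agree_on_def)
  show "(\<lambda>s. s(j := v)) ` {s \<in> msgs n t. agree_on D s x \<and> s j = v'}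
      \<subseteq> {s \<in> msgs n t. agree_on D s x \<and> s j = v}"
    using assms msgs_fun_upd by (auto simp: agree_on_def)
qed auto

definition indep_coord_given ::
  "nat \<Rightarrow> (nat \<Rightarrow> nat) \<Rightarrow> ((nat \<Rightarrow> bool list) \<Rightarrow> bool) \<Rightarrow> nat \<Rightarrow> nat set \<Rightarrow> bool" where
  "indep_coord_given n t Q j D \<longleftrightarrow>
     (\<forall>x \<in> msgs n t. \<forall>v v'. length v = t j \<longrightarrow> length v' = t j \<longrightarrow>
        card {s \<in> msgs n t. agree_on D s x \<and> s j = v \<and> Q s}
        = card {s \<in> msgs n t. agree_on D s x \<and> s j = v' \<and> Q s})"

lemma indep_coord_given_True:
  "j \<notin> D \<Longrightarrow> j \<in> {1..n} \<Longrightarrow> indep_coord_given n t (\<lambda>_. True) j D"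
  by (auto simp: indep_coord_given_def intro: card_cylinder_coord_swap)

lemma indep_coord_given_Diff_singleton:
  assumes indep: "indep_coord_given n t Q j D" and l: "l \<in> D" "l \<in> {1..n}"
  shows "indep_coord_given n t Q j (D - {l})"
  unfolding indep_coord_given_def
proof (intro ballI allI impI)
  fix x and v v' :: "bool list" assume x: "x \<in> msgs n t" and "length v = t j" "length v' = t j"
  then have "card {s \<in> msgs n t. agree_on D s (x(l := u)) \<and> s j = v \<and> Q s}
           = card {s \<in> msgs n t. agree_on D s (x(l := u)) \<and> s j = v' \<and> Q s}"
    if "length u = t l" for u
    using indep msgs_fun_upd[OF x l(2) that] unfolding indep_coord_given_def by blast
  then show "card {s \<in> msgs n t. agree_on (D - {l}) s x \<and> s j = v \<and> Q s}
           = card {s \<in> msgs n t. agree_on (D - {l}) s x \<and> s j = v' \<and> Q s}"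
    by (simp add: card_cylinder_split[OF l])
qed

lemma indep_coord_given_antimono:
  assumes indep: "indep_coord_given n t Q j D" and "D' \<subseteq> D" "D \<subseteq> {1..n}"
  shows "indep_coord_given n t Q j D'"
proof -
  have "indep_coord_given n t Q j (D - F)" if "finite F" "F \<subseteq> D" for F
    using that
  proof (induction F rule: finite_induct)
    case empty
    then show ?case
      using indep by simp
  next
    case (insert l F)
    have "l \<in> D - F" "l \<in> {1..n}"
      using insert.hyps(2) insert.prems \<open>D \<subseteq> {1..n}\<close> by auto
    moreover have "D - insert l F = (D - F) - {l}"
      by blast
    ultimately show ?case
      using indep_coord_given_Diff_singleton insert.IH insert.prems by simp
  qed
  moreover have "finite (D - D')"
    using \<open>D \<subseteq> {1..n}\<close> finite_subset by blast
  moreover have "D - (D - D') = D'"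
    using \<open>D' \<subseteq> D\<close> by blast
  ultimately show ?thesis
    by (metis Diff_subset)
qed

lemma indep_coord_given_determined:
  assumes indep: "indep_coord_given n t Q j D"
    and determined: "\<And>s s'. s \<in> msgs n t \<Longrightarrow> s' \<in> msgs n t \<Longrightarrow> agree_on D s s' \<Longrightarrow> Q s \<Longrightarrow> Q s'
                       \<Longrightarrow> agree_on V s s'"
  shows "indep_coord_given n t Q j (D \<union> V)"
  unfolding indep_coord_given_def
proof (intro ballI allI impI)
  fix x and v v' :: "bool list" assume x: "x \<in> msgs n t" and "length v = t j" "length v' = t j"
  then have indep_x: "card {s \<in> msgs n t. agree_on D s x \<and> s j = v \<and> Q s}
                    = card {s \<in> msgs n t. agree_on D s x \<and> s j = v' \<and> Q s}"
    using indep unfolding indep_coord_given_def by blast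
  show "card {s \<in> msgs n t. agree_on (D \<union> V) s x \<and> s j = v \<and> Q s}
      = card {s \<in> msgs n t. agree_on (D \<union> V) s x \<and> s j = v' \<and> Q s}"
  proof (cases "\<exists>z \<in> msgs n t. agree_on (D \<union> V) z x \<and> Q z")
    case True
    then obtain z where z: "z \<in> msgs n t" "agree_on (D \<union> V) z x" "Q z"
      by blast
    have "agree_on (D \<union> V) s x \<longleftrightarrow> agree_on D s x" if "s \<in> msgs n t" "Q s" for s
      using determined[OF that(1) z(1) _ that(2) z(3)] z(2) unfolding agree_on_def by auto
    then have "{s \<in> msgs n t. agree_on (D \<union> V) s x \<and> s j = w \<and> Q s}
             = {s \<in> msgs n t. agree_on D s x \<and> s j = w \<and> Q s}" for w
      by blast
    then show ?thesis
      using indep_x by presburger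
  next
    case False
    then have "{s \<in> msgs n t. agree_on (D \<union> V) s x \<and> s j = w \<and> Q s} = {}" for w
      by blast
    then show ?thesis
      by presburger
  qed
qed

definition cond_prob ::
  "nat \<Rightarrow> (nat \<Rightarrow> nat) \<Rightarrow> ((nat \<Rightarrow> bool list) \<Rightarrow> bool) \<Rightarrow> nat set \<Rightarrow> (nat \<Rightarrow> bool list) \<Rightarrow> real" where
  "cond_prob n t Q D x =
     real (card {s \<in> msgs n t. agree_on D s x \<and> Q s}) / real (card {s \<in> msgs n t. agree_on D s x})"

lemma card_cylinder_insert_indep:
  assumes indep: "indep_coord_given n t Q j D" and j: "j \<notin> D" "j \<in> {1..n}" and x: "x \<in> msgs n t"
  shows "card {s \<in> msgs n t. agree_on D s x \<and> Q s}
       = card {u :: bool list. length u = t j} * card {s \<in> msgs n t. agree_on (insert j D) s x \<and> Q s}"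
proof -
  have xj: "length (x j) = t j"
    using x j(2) unfolding msgs_def by blast
  have "card {s \<in> msgs n t. agree_on D s x \<and> Q s}
      = (\<Sum>u | length u = t j. card {s \<in> msgs n t. agree_on (insert j D) s (x(j := u)) \<and> Q s})"
    using card_cylinder_split[of j "insert j D" n t x Q] j by simp
  also have "\<dots> = (\<Sum>u | length u = t j. card {s \<in> msgs n t. agree_on D s x \<and> s j = u \<and> Q s})"
    using j(1) unfolding agree_on_def by (intro sum.cong refl arg_cong[where f = card]) auto
  also have "\<dots> = (\<Sum>u \<in> {u :: bool list. length u = t j}.
                        card {s \<in> msgs n t. agree_on D s x \<and> s j = x j \<and> Q s})"
  proof (intro sum.cong refl)
    fix u :: "bool list" assume "u \<in> {u. length u = t j}"
    then show "card {s \<in> msgs n t. agree_on D s x \<and> s j = u \<and> Q s}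
             = card {s \<in> msgs n t. agree_on D s x \<and> s j = x j \<and> Q s}"
      using indep x xj unfolding indep_coord_given_def by blast
  qed
  also have "{s \<in> msgs n t. agree_on D s x \<and> s j = x j \<and> Q s}
           = {s \<in> msgs n t. agree_on (insert j D) s x \<and> Q s}"
    unfolding agree_on_def by auto
  finally show ?thesis
    by simp
qed

lemma cond_prob_insert_indep:
  assumes "indep_coord_given n t Q j D" "j \<notin> D" "j \<in> {1..n}" "x \<in> msgs n t"
  shows "cond_prob n t Q (insert j D) x = cond_prob n t Q D x"
proof -
  have "replicate (t j) False \<in> {u. length u = t j}"
    by simp
  then have "card {u :: bool list. length u = t j} > 0"
    using finite_list_length card_gt_0_iff by blast
  then show ?thesis
    using card_cylinder_insert_indep[OF assms]
      card_cylinder_insert_indep[OF indep_coord_given_True[OF assms(2,3)] assms(2-4)]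
    unfolding cond_prob_def by simp
qed

lemma cond_prob_cong: "agree_on D x x' \<Longrightarrow> cond_prob n t Q D x = cond_prob n t Q D x'"
  unfolding cond_prob_def agree_on_def by simp

lemma cond_prob_pos_iff:
  "x \<in> msgs n t \<Longrightarrow> 0 < cond_prob n t Q D x \<longleftrightarrow> (\<exists>s \<in> msgs n t. agree_on D s x \<and> Q s)"
  unfolding cond_prob_def using finite_msgs[of n t]
  by (auto simp: card_gt_0_iff agree_on_def zero_less_divide_iff)

locale secure_code =
  fixes n m :: nat and A W P :: "nat \<Rightarrow> nat set"
    and t :: "nat \<Rightarrow> nat" and M :: nat and phi :: "(nat \<Rightarrow> bool list) \<Rightarrow> nat"
  assumes well_formed: "well_formed_problem n m A W P"
    and code: "secure_index_code n m A W P t M phi"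
begin

lemma prohibited_in_B: "i \<in> {1..m} \<Longrightarrow> j \<in> P i \<Longrightarrow> j \<in> B_set n A W i"
  using well_formed unfolding well_formed_problem_def by blast

lemma side_info_requested_subset: "i \<in> {1..m} \<Longrightarrow> A i \<union> W i \<subseteq> {1..n}"
  using well_formed unfolding well_formed_problem_def by blast

lemma side_info_disjoint: "i \<in> {1..m} \<Longrightarrow> A i \<inter> (B_set n A W i \<union> W i) = {}"
  using well_formed unfolding well_formed_problem_def B_set_def by blast

lemma decodable:
  "i \<in> {1..m} \<Longrightarrow> x \<in> msgs n t \<Longrightarrow> x' \<in> msgs n t \<Longrightarrow> phi x = phi x' \<Longrightarrow> agree_on (A i) x x'
    \<Longrightarrow> agree_on (W i) x x'"
  using code unfolding secure_index_code_def by blast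

lemma output_indep_prohibited_given_side_info:
  assumes i: "i \<in> {1..m}" and j: "j \<in> P i"
  shows "indep_coord_given n t (\<lambda>s. phi s = y) j (A i)"
  unfolding indep_coord_given_def
proof (intro ballI allI impI)
  fix x and v v' :: "bool list" assume x: "x \<in> msgs n t" and v: "length v = t j" "length v' = t j"
  have "j \<in> {1..n}" "j \<notin> A i"
    using prohibited_in_B[OF i j] unfolding B_set_def by auto
  then have swap: "card {s \<in> msgs n t. agree_on (A i) s x \<and> s j = v}
                 = card {s \<in> msgs n t. agree_on (A i) s x \<and> s j = v'}"
    using card_cylinder_coord_swap v by blast
  have security: "card {s \<in> msgs n t. agree_on (A i) s x \<and> s j = w \<and> phi s = y}
                    * card {s \<in> msgs n t. agree_on (A i) s x}
                = card {s \<in> msgs n t. agree_on (A i) s x \<and> s j = w}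
                    * card {s \<in> msgs n t. agree_on (A i) s x \<and> phi s = y}" for w
    using code i j unfolding secure_index_code_def by blast
  have "card {s \<in> msgs n t. agree_on (A i) s x \<and> s j = v \<and> phi s = y} * card {s \<in> msgs n t. agree_on (A i) s x}
      = card {s \<in> msgs n t. agree_on (A i) s x \<and> s j = v' \<and> phi s = y} * card {s \<in> msgs n t. agree_on (A i) s x}"
    using security[of v] security[of v'] unfolding swap by (rule trans[OF _ sym])
  moreover have "card {s \<in> msgs n t. agree_on (A i) s x} > 0"
    using x finite_msgs[of n t] unfolding card_gt_0_iff agree_on_def by auto
  ultimately show "card {s \<in> msgs n t. agree_on (A i) s x \<and> s j = v \<and> phi s = y}
                 = card {s \<in> msgs n t. agree_on (A i) s x \<and> s j = v' \<and> phi s = y}"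
    by simp
qed

lemma output_indep_prohibited_given_subset:
  assumes i: "i \<in> {1..m}" and j: "j \<in> P i" and D: "D \<subseteq> A i \<union> W i"
  shows "indep_coord_given n t (\<lambda>s. phi s = y) j D"
proof (rule indep_coord_given_antimono[OF _ D side_info_requested_subset[OF i]])
  show "indep_coord_given n t (\<lambda>s. phi s = y) j (A i \<union> W i)"
    using output_indep_prohibited_given_side_info[OF i j] decodable[OF i]
    by (rule indep_coord_given_determined) auto
qed

lemma cond_prob_output_N_fam:
  assumes i: "i \<in> {1..m}" and T: "T \<subseteq> {1..n} - B_set n A W i"
    and Z: "Z \<in> N_fam n A W P i T" and x: "x \<in> msgs n t"
  shows "cond_prob n t (\<lambda>s. phi s = y) ({1..n} - Z) x
       = cond_prob n t (\<lambda>s. phi s = y) ({1..n} - (T \<union> B_set n A W i)) x"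
proof -
  define D where "D = {1..n} - (T \<union> B_set n A W i)"
  from Z consider j where "j \<in> P i" "Z = T \<union> B_set n A W i - {j}" | "Z = T \<union> B_set n A W i"
    unfolding N_fam_def by blast
  then show ?thesis
  proof cases
    case (1 j)
    have "j \<in> B_set n A W i"
      using prohibited_in_B[OF i \<open>j \<in> P i\<close>] .
    then have "j \<in> {1..n}" "j \<notin> D" "{1..n} - Z = insert j D" "D \<subseteq> A i \<union> W i"
      unfolding D_def \<open>Z = _\<close> B_set_def by auto
    then show ?thesis
      using cond_prob_insert_indep[OF output_indep_prohibited_given_subset[OF i \<open>j \<in> P i\<close>] _ _ x]
      unfolding D_def by simp
  qed simp
qed

lemma cond_prob_output_dash_rel:
  assumes "(S, S') \<in> dash_rel n m A W P" and x: "x \<in> msgs n t"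
  shows "cond_prob n t (\<lambda>s. phi s = y) ({1..n} - S) x = cond_prob n t (\<lambda>s. phi s = y) ({1..n} - S') x"
proof -
  let ?cp = "\<lambda>X. cond_prob n t (\<lambda>s. phi s = y) ({1..n} - X) x"
  have same_family: "?cp X = ?cp Y"
    if "\<exists>i \<in> {1..m}. \<exists>T. P i \<noteq> {} \<and> T \<subseteq> {1..n} - B_set n A W i
          \<and> X \<in> N_fam n A W P i T \<and> Y \<in> N_fam n A W P i T" for X Y
  proof -
    from that obtain i T where "i \<in> {1..m}" "T \<subseteq> {1..n} - B_set n A W i"
      "X \<in> N_fam n A W P i T" "Y \<in> N_fam n A W P i T"
      by blast
    then show ?thesis
      using cond_prob_output_N_fam x by presburger
  qed
  show ?thesis
    using assms(1) unfolding dash_rel_def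
  proof (induction rule: trancl_induct)
    case (base Y)
    then show ?case
      using same_family by simp
  next
    case (step Y Z)
    then show ?case
      using same_family[of Y Z] by simp
  qed
qed

lemma dash_rel_output_possible:
  assumes rel: "(S, S') \<in> dash_rel n m A W P" and x: "x \<in> msgs n t" "x' \<in> msgs n t"
    and agree: "agree_on ({1..n} - S') x x'"
  obtains z where "z \<in> msgs n t" "agree_on ({1..n} - S) z x'" "phi z = phi x"
proof -
  let ?cp = "\<lambda>D y. cond_prob n t (\<lambda>s. phi s = phi x) D y"
  have "0 < ?cp ({1..n} - S) x"
    unfolding cond_prob_pos_iff[OF x(1)] using x(1) by (auto simp: agree_on_def)
  also have "?cp ({1..n} - S) x = ?cp ({1..n} - S') x"
    by (rule cond_prob_output_dash_rel[OF rel x(1)])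
  also have "\<dots> = ?cp ({1..n} - S') x'"
    by (rule cond_prob_cong[OF agree])
  also have "\<dots> = ?cp ({1..n} - S) x'"
    by (rule cond_prob_output_dash_rel[OF rel x(2), symmetric])
  finally show ?thesis
    using that by (auto simp only: cond_prob_pos_iff[OF x(2)])
qed

lemma dash_rel_not_decodable:
  assumes rel: "(S, S') \<in> dash_rel n m A W P" and k: "k \<in> S'" "k \<notin> S"
    and j: "j \<in> {1..m}" "k \<in> W j" "insert k S \<subseteq> B_set n A W j \<union> W j"
  shows "t k = 0"
proof (rule ccontr)
  assume "t k \<noteq> 0"
  have kn: "k \<in> {1..n}"
    using side_info_requested_subset[OF j(1)] j(2) by blast
  define x0 where "x0 = (\<lambda>l. if l \<in> {1..n} then replicate (t l) False else [])"
  define x1 where "x1 = x0(k := replicate (t k) True)"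
  have x0: "x0 \<in> msgs n t"
    unfolding msgs_def x0_def by simp
  have x1: "x1 \<in> msgs n t"
    unfolding x1_def using msgs_fun_upd[OF x0 kn] by simp
  have "x1 k \<noteq> x0 k"
    using \<open>t k \<noteq> 0\<close> kn by (simp add: x1_def x0_def)
  have "agree_on ({1..n} - S') x0 x1"
    using k(1) by (simp add: agree_on_def x1_def)
  then obtain z where z: "z \<in> msgs n t" "agree_on ({1..n} - S) z x1" "phi z = phi x0"
    using dash_rel_output_possible[OF rel x0 x1] by blast
  have side_info: "A j \<subseteq> {1..n} - insert k S"
    using side_info_requested_subset[OF j(1)] side_info_disjoint[OF j(1)] j(3) by blast
  have "z a = x0 a" if "a \<in> A j" for a
  proof -
    have "a \<in> {1..n} - S" "a \<noteq> k"
      using that side_info by auto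
    then show ?thesis
      using z(2) unfolding agree_on_def x1_def by simp
  qed
  then have "agree_on (W j) z x0"
    using decodable[OF j(1) z(1) x0 z(3)] unfolding agree_on_def by blast
  then have "z k = x0 k"
    using j(2) unfolding agree_on_def by blast
  moreover have "z k = x1 k"
    using z(2) kn k(2) unfolding agree_on_def by blast
  ultimately show False
    using \<open>x1 k \<noteq> x0 k\<close> by simp
qed

lemma acyclic_wrt_dash_rel_empty:
  assumes rel: "(S, S') \<in> dash_rel n m A W P" and K: "K \<subseteq> S' - S" "acyclic_wrt n m A W S K"
    and pos: "\<forall>k \<in> K. 0 < t k"
  shows "K = {}"
proof (rule ccontr)
  assume "K \<noteq> {}"
  then obtain k j where k: "k \<in> K" and j: "j \<in> {1..m}" "k \<in> W j" "insert k S \<subseteq> B_set n A W j \<union> W j"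
    using acyclic_wrt_first[OF K(2)] by blast
  have "k \<in> S'" "k \<notin> S"
    using k K(1) by auto
  then have "t k = 0"
    using dash_rel_not_decodable[OF rel _ _ j] by blast
  moreover have "0 < t k"
    using pos k by blast
  ultimately show False
    by simp
qed

end

lemma feasible_obtains_positive_code:
  assumes "feasible n m A W P"
  obtains t M phi where "secure_index_code n m A W P t M phi" "\<forall>k \<in> {1..n}. 0 < t k"
proof -
  obtain R t M phi where "R > 0" "secure_index_code n m A W P t M phi"
    and rate: "\<forall>k \<in> {1..n}. R \<le> real (t k) / log 2 (real M)"
    using assms unfolding feasible_def sec_achievable_sym_def by blast
  moreover have "0 < t k" if "k \<in> {1..n}" for k
  proof (rule ccontr)
    assume "\<not> 0 < t k"
    then show False
      using rate[rule_format, OF that] \<open>R > 0\<close> by simp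
  qed
  ultimately show ?thesis
    using that by blast
qed

lemma h_MAIS_dash_rel:
  assumes "well_formed_problem n m A W P" "feasible n m A W P"
    and S': "S' \<subseteq> {1..n}" and rel: "(S, S') \<in> dash_rel n m A W P"
  shows "h_MAIS n m A W S S' = 0"
proof -
  obtain t M phi where code: "secure_index_code n m A W P t M phi" and pos: "\<forall>k \<in> {1..n}. 0 < t k"
    using feasible_obtains_positive_code[OF assms(2)] .
  interpret secure_code n m A W P t M phi
    using assms(1) code by unfold_locales
  obtain K where K: "K \<subseteq> S' - S" "acyclic_wrt n m A W S K" "h_MAIS n m A W S S' = card K"
    using h_MAIS_attained[OF S'] .
  have "\<forall>k \<in> K. 0 < t k"
    using pos K(1) S' by blast
  then show ?thesis
    using acyclic_wrt_dash_rel_empty[OF rel K(1,2)] K(3) by simp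
qed

theorem lemma2:
  fixes n m :: nat and A W P :: "nat \<Rightarrow> nat set" and R :: real and g :: "nat set \<Rightarrow> real"
  assumes "well_formed_problem n m A W P"
    and "feasible n m A W P"
    and "sec_achievable_sym n m A W P R"
    and "G_conditions n m A W P R g"
  shows "(\<forall>S S'. S \<subseteq> S' \<and> S' \<subseteq> {1..n} \<longrightarrow>
            g S' \<ge> g S + R * real (h_MAIS n m A W S S'))
       \<and> (\<forall>S S'. S \<subseteq> S' \<and> S' \<subseteq> {1..n} \<and> (S, S') \<in> dash_rel n m A W P \<longrightarrow>
            h_MAIS n m A W S S' = 0)"
proof (intro conjI allI impI; elim conjE)
  fix S S' assume "S \<subseteq> S'" "S' \<subseteq> {1..n}"
  then show "g S' \<ge> g S + R * real (h_MAIS n m A W S S')"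
    by (rule G_conditions_h_MAIS_bound[OF assms(4)])
next
  fix S S' assume "S' \<subseteq> {1..n}" "(S, S') \<in> dash_rel n m A W P"
  then show "h_MAIS n m A W S S' = 0"
    by (rule h_MAIS_dash_rel[OF assms(1,2)])
qed

end
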